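(* In the receding-horizon platoon coordination setting at decision instance $t^\star_n$ described in the context, with random travel times (and remaining times) whose conditional distribution given the observed history is supported on a countable set, the game $G^s_n=(\mathcal N,\mathcal W_n,\{U^i_n\}_{i\in\mathcal N})$, where $U^i_n(\boldsymbol w^i_n,\boldsymbol w^{-i}_n)=\mathbb E\big[U^i_n(\boldsymbol w^i_n,\boldsymbol w^{-i}_n,\boldsymbol\tau)\mid \boldsymbol\tau^{\rm h}_n=\tau^{\rm h}_n\big]$, is an exact potential game and thus admits at least one pure Nash equilibrium.
   Context: Setting: a directed graph $\mathcal G=(\mathcal V,\mathcal E)$, vehicles $\mathcal N=\{1,\dots,N\}$, vehicle $i$ having a fixed path of edges $e^i_1,\dots,e^i_{|\mathcal P^i|}$ with $e^i_k$ from node $v^i_k$ to $v^i_{k+1}$. At a decision instance $t^\star_n\in\mathbb Z_+$, each vehicle $i$ decides waiting times $\boldsymbol w^i_n=(w^i_{a_i,n},\dots,w^i_{b_i,n})\in\mathbb Z_+^{b_i-a_i+1}$ at nodes $v^i_{a_i},\dots,v^i_{b_i}$, for given indices $1\le a_i\le b_i\le|\mathcal P^i|$ (in the receding-horizon scheme with horizon $H$: if vehicle $i$ is on edge $e^i_j$ then $a_i=j+1$, $b_i=j+H$; if at node $v^i_k$ then $a_i=k$, $b_i=k+H$), chosen from a finite set $\mathcal W^i_n$; $\mathcal W_n=\prod_i\mathcal W^i_n$. A realization $\tau$ of the random element $\boldsymbol\tau$ specifies travel times $\tau(e,t)\in\mathbb Z_+$ for all $e,t$ and, for each $i$, the number $\tau^i_n\in\mathbb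 Z_+$ of time steps until vehicle $i$ reaches node $v^i_{a_i}$ ($0$ if it is already there). $\boldsymbol\tau^{\rm h}_n=\tau^{\rm h}_n$ is the observed history of travel times up to $t^\star_n$, and expectations use the conditional probabilities $\Pr(\boldsymbol\tau=\tau\mid\boldsymbol\tau^{\rm h}_n=\tau^{\rm h}_n)$. Given $\tau$ and $\boldsymbol w_n$, departure times are $d^i_{a_i}=t^\star_n+\tau^i_n+w^i_{a_i,n}$, $d^i_{l+1}=d^i_l+\tau(e^i_l,d^i_l)+w^i_{l+1,n}$ for $a_i\le l<b_i$; $C_n(e,t,\boldsymbol w_n,\tau)=\{i:\exists k\in\{a_i,\dots,b_i\},\ e^i_k=e,\ d^i_k=t\}$; and with a reward function $R:\mathbb Z_{\ge1}\times\mathcal E\to\mathbb R$ and waiting costs $\Lambda_i:\mathcal W^i_n\to\mathbb R$, $$U^i_n(\boldsymbol w^i_n,\boldsymbol w^{-i}_n,\tau)=\sum_{k=a_i}^{b_i}R\big(|C_n(e^i_k,d^i_k,\boldsymbol w_n,\tau)|,e^i_k\big)-\Lambda_i(\boldsymbol w^i_n).$$ An exact potential game is one admitting a function $\Phi$ on action profiles such that any unilateral action change of a player changes $\Phi$ by exactly the change of that player's utility; a pure Nash equilibrium is a profile from which no player can profitably deviate unilaterally. *)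

theory Defs
  imports "HOL-Probability.Probability_Mass_Function"
begin

text \<open>A realization of the random element: travel times tau(e,t) and, for every vehicle,
  the remaining time until it reaches node v^i_{a_i}.\<close>
type_synonym ('e, 'i) realization = "('e \<Rightarrow> nat \<Rightarrow> nat) \<times> ('i \<Rightarrow> nat)"

text \<open>Departure time at node index a + m, for a vehicle with pth p, first decision index a,
  waiting vector w (indexed by node index), travel times tt, remaining time r.\<close>
primrec dep_off :: "nat \<Rightarrow> (nat \<Rightarrow> 'e) \<Rightarrow> nat \<Rightarrow> (nat \<Rightarrow> nat) \<Rightarrow> ('e \<Rightarrow> nat \<Rightarrow> nat)
                     \<Rightarrow> nat \<Rightarrow> nat \<Rightarrow> nat" where
  "dep_off ts p a w tt r 0 = ts + r + w a"
| "dep_off ts p a w tt r (Suc m) =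
     dep_off ts p a w tt r m + tt (p (a + m)) (dep_off ts p a w tt r m) + w (a + m + 1)"

text \<open>d^i_k for k >= a_i.\<close>
definition departure :: "nat \<Rightarrow> ('i \<Rightarrow> nat \<Rightarrow> 'e) \<Rightarrow> ('i \<Rightarrow> nat)
     \<Rightarrow> ('i \<Rightarrow> nat \<Rightarrow> nat) \<Rightarrow> ('e, 'i) realization \<Rightarrow> 'i \<Rightarrow> nat \<Rightarrow> nat" where
  "departure ts pth a w \<tau> i k = dep_off ts (pth i) (a i) (w i) (fst \<tau>) (snd \<tau> i) (k - a i)"

definition coll :: "nat \<Rightarrow> ('i \<Rightarrow> nat \<Rightarrow> 'e) \<Rightarrow> ('i \<Rightarrow> nat) \<Rightarrow> ('i \<Rightarrow> nat)
     \<Rightarrow> ('i \<Rightarrow> nat \<Rightarrow> nat) \<Rightarrow> ('e, 'i) realization \<Rightarrow> 'e \<Rightarrow> nat \<Rightarrow> 'i set" where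
  "coll ts pth a b w \<tau> e t =
     {j. \<exists>k\<in>{a j..b j}. pth j k = e \<and> departure ts pth a w \<tau> j k = t}"

definition utility :: "nat \<Rightarrow> ('i \<Rightarrow> nat \<Rightarrow> 'e) \<Rightarrow> ('i \<Rightarrow> nat) \<Rightarrow> ('i \<Rightarrow> nat)
     \<Rightarrow> (nat \<Rightarrow> 'e \<Rightarrow> real) \<Rightarrow> ('i \<Rightarrow> (nat \<Rightarrow> nat) \<Rightarrow> real)
     \<Rightarrow> 'i \<Rightarrow> ('i \<Rightarrow> nat \<Rightarrow> nat) \<Rightarrow> ('e, 'i) realization \<Rightarrow> real" where
  "utility ts pth a b R \<Lambda> i w \<tau> =
     (\<Sum>k = a i..b i. R (card (coll ts pth a b w \<tau> (pth i k) (departure ts pth a w \<tau> i k)))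
                        (pth i k)) - \<Lambda> i (w i)"

text \<open>Expected utility given the (conditional) distribution P of the random element.\<close>
definition exp_utility :: "('e, 'i) realization pmf \<Rightarrow> nat \<Rightarrow> ('i \<Rightarrow> nat \<Rightarrow> 'e) \<Rightarrow> ('i \<Rightarrow> nat)
     \<Rightarrow> ('i \<Rightarrow> nat) \<Rightarrow> (nat \<Rightarrow> 'e \<Rightarrow> real) \<Rightarrow> ('i \<Rightarrow> (nat \<Rightarrow> nat) \<Rightarrow> real)
     \<Rightarrow> 'i \<Rightarrow> ('i \<Rightarrow> nat \<Rightarrow> nat) \<Rightarrow> real" where
  "exp_utility P ts pth a b R \<Lambda> i w =
     measure_pmf.expectation P (\<lambda>\<tau>. utility ts pth a b R \<Lambda> i w \<tau>)"

definition exact_potential_game :: "('i \<Rightarrow> 'a set) \<Rightarrow> ('i \<Rightarrow> ('i \<Rightarrow> 'a) \<Rightarrow> real) \<Rightarrow> bool" where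
  "exact_potential_game A u \<longleftrightarrow>
     (\<exists>\<Phi> :: ('i \<Rightarrow> 'a) \<Rightarrow> real. \<forall>w \<in> Pi UNIV A. \<forall>i. \<forall>x \<in> A i.
        u i (w(i := x)) - u i w = \<Phi> (w(i := x)) - \<Phi> w)"

definition pure_nash :: "('i \<Rightarrow> 'a set) \<Rightarrow> ('i \<Rightarrow> ('i \<Rightarrow> 'a) \<Rightarrow> real) \<Rightarrow> ('i \<Rightarrow> 'a) \<Rightarrow> bool" where
  "pure_nash A u w \<longleftrightarrow> w \<in> Pi UNIV A \<and> (\<forall>i. \<forall>x \<in> A i. u i (w(i := x)) \<le> u i w)"

end

theory Submission
  imports Defs
begin

text \<open>For every realization of the travel times this is a congestion game in the sense of
  Rosenthal: vehicle \<open>j\<close> occupies the resources \<open>(e, t)\<close> = (edge, departure time) of its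
  horizon, and the reward of a resource depends only on how many vehicles occupy it. The sum over
  occupied resources \<open>r = (e, t)\<close> of \<open>R(1, e) + \<dots> + R(|C(r)|, e)\<close> changes under a unilateral
  deviation of vehicle \<open>i\<close> exactly as \<open>i\<close>'s reward does, because only \<open>i\<close> enters or leaves a
  resource and a simple path never occupies the same resource twice. Subtracting the total waiting
  cost gives an exact potential for each realization. All these quantities are bounded uniformly
  in the realization (a congestion never exceeds the number of vehicles), so expectation is linear
  on them and the expected potential is an exact potential of the expected game. On the finite set
  of profiles it attains a maximum, which is a pure Nash equilibrium.\<close>

definition congestion :: "('i \<Rightarrow> 'r set) \<Rightarrow> 'r \<Rightarrow> nat" where
  "congestion U r = card {j. r \<in> U j}"

definition rosenthal_potential :: "('r \<Rightarrow> nat \<Rightarrow> real) \<Rightarrow> ('i \<Rightarrow> 'r set) \<Rightarrow> real" where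
  "rosenthal_potential c U = (\<Sum>r\<in>(\<Union>j. U j). \<Sum>m = 1..congestion U r. c r m)"

lemma congestion_split:
  fixes U :: "'i::finite \<Rightarrow> 'r set"
  shows "congestion U r = card {j. j \<noteq> i \<and> r \<in> U j} + (if r \<in> U i then 1 else 0)"
proof -
  have "{j. r \<in> U j} = (if r \<in> U i then insert i else id) {j. j \<noteq> i \<and> r \<in> U j}"
    by auto
  then show ?thesis
    unfolding congestion_def by simp
qed

lemma sum_congestion_fun_upd:
  fixes U :: "'i::finite \<Rightarrow> 'r set" and c :: "'r \<Rightarrow> nat \<Rightarrow> real"
  shows "(\<Sum>m = 1..congestion (U(i := S)) r. c r m) - (\<Sum>m = 1..congestion U r. c r m)
       = (if r \<in> S then c r (congestion (U(i := S)) r) else 0)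
       - (if r \<in> U i then c r (congestion U r) else 0)"
proof -
  define n where "n = card {j. j \<noteq> i \<and> r \<in> U j}"
  have "{j. j \<noteq> i \<and> r \<in> (U(i := S)) j} = {j. j \<noteq> i \<and> r \<in> U j}"
    by auto
  then have "congestion (U(i := S)) r = n + (if r \<in> S then 1 else 0)"
    and "congestion U r = n + (if r \<in> U i then 1 else 0)"
    using congestion_split[of "U(i := S)" r i] congestion_split[of U r i] by (simp_all add: n_def)
  then show ?thesis
    by (simp add: sum.cl_ivl_Suc)
qed

lemma rosenthal_potential_superset:
  fixes U :: "'i::finite \<Rightarrow> 'r set"
  assumes "finite T" "(\<Union>j. U j) \<subseteq> T"
  shows "rosenthal_potential c U = (\<Sum>r\<in>T. \<Sum>m = 1..congestion U r. c r m)"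
  unfolding rosenthal_potential_def
  by (rule sum.mono_neutral_left) (use assms in \<open>auto simp: congestion_def\<close>)

lemma rosenthal_potential_fun_upd:
  fixes U :: "'i::finite \<Rightarrow> 'r set"
  assumes "\<And>j. finite (U j)" "finite S"
  shows "rosenthal_potential c (U(i := S)) - rosenthal_potential c U
       = (\<Sum>r\<in>S. c r (congestion (U(i := S)) r)) - (\<Sum>r\<in>U i. c r (congestion U r))"
proof -
  define T where "T = (\<Union>j. U j) \<union> S"
  have "finite T"
    using assms by (simp add: T_def)
  have "(\<Union>j. (U(i := S)) j) \<subseteq> T" "(\<Union>j. U j) \<subseteq> T" "S \<subseteq> T" "U i \<subseteq> T"
    by (auto simp: T_def)
  then have "rosenthal_potential c (U(i := S)) - rosenthal_potential c U
      = (\<Sum>r\<in>T. (if r \<in> S then c r (congestion (U(i := S)) r) else 0)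
                - (if r \<in> U i then c r (congestion U r) else 0))"
    using \<open>finite T\<close>
    by (simp only: rosenthal_potential_superset sum_subtractf[symmetric] sum_congestion_fun_upd)
  also have "\<dots> = (\<Sum>r\<in>S. c r (congestion (U(i := S)) r)) - (\<Sum>r\<in>U i. c r (congestion U r))"
    using \<open>finite T\<close> \<open>S \<subseteq> T\<close> \<open>U i \<subseteq> T\<close>
    by (simp add: sum_subtractf sum.If_cases Int_absorb1)
  finally show ?thesis .
qed

lemma abs_rosenthal_potential_le:
  fixes U :: "'i::finite \<Rightarrow> 'r set"
  assumes "\<And>j. finite (U j)"
  shows "\<bar>rosenthal_potential c U\<bar> \<le> (\<Sum>j\<in>UNIV. \<Sum>r\<in>U j. \<Sum>m\<le>CARD('i). \<bar>c r m\<bar>)"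
proof -
  define g where "g r = (\<Sum>m\<le>CARD('i). \<bar>c r m\<bar>)" for r
  have "congestion U r \<le> CARD('i)" for r
    unfolding congestion_def by (rule card_mono) auto
  then have inner_le: "\<bar>\<Sum>m = 1..congestion U r. c r m\<bar> \<le> g r" for r
    unfolding g_def by (intro order_trans[OF sum_abs] sum_mono2) auto
  have "\<bar>rosenthal_potential c U\<bar> \<le> (\<Sum>r\<in>(\<Union>j. U j). g r)"
    unfolding rosenthal_potential_def by (rule order_trans[OF sum_abs sum_mono]) (rule inner_le)
  also have "(\<Union>j. U j) = snd ` (SIGMA j:UNIV. U j)"
    by force
  also have "(\<Sum>r\<in>snd ` (SIGMA j:UNIV. U j). g r) \<le> (\<Sum>p\<in>(SIGMA j:UNIV. U j). g (snd p))"
    using assms by (intro order_trans[OF sum_image_le]) (auto simp: g_def intro: sum_nonneg)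
  also have "\<dots> = (\<Sum>j\<in>UNIV. \<Sum>r\<in>U j. g r)"
    using assms by (simp add: sum.Sigma split_beta)
  finally show ?thesis
    unfolding g_def .
qed

lemma sum_fun_upd_diff:
  fixes f :: "'i::finite \<Rightarrow> 'a \<Rightarrow> 'b::ab_group_add"
  shows "(\<Sum>j\<in>UNIV. f j ((w(i := x)) j)) - (\<Sum>j\<in>UNIV. f j (w j)) = f i x - f i (w i)"
proof -
  have "(\<Sum>j\<in>UNIV - {i}. f j ((w(i := x)) j)) = (\<Sum>j\<in>UNIV - {i}. f j (w j))"
    by (rule sum.cong) auto
  then show ?thesis
    by (simp add: sum.remove[of UNIV i])
qed

lemma exact_potential_game_expectation:
  fixes u :: "'i \<Rightarrow> ('i \<Rightarrow> 'a) \<Rightarrow> 'b \<Rightarrow> real" and \<Phi> :: "('i \<Rightarrow> 'a) \<Rightarrow> 'b \<Rightarrow> real"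
  assumes potential: "\<And>i w x \<tau>. u i (w(i := x)) \<tau> - u i w \<tau> = \<Phi> (w(i := x)) \<tau> - \<Phi> w \<tau>"
    and u_bounded: "\<And>i w. \<exists>B. \<forall>\<tau>. \<bar>u i w \<tau>\<bar> \<le> B"
    and \<Phi>_bounded: "\<And>w. \<exists>B. \<forall>\<tau>. \<bar>\<Phi> w \<tau>\<bar> \<le> B"
  shows "exact_potential_game A (\<lambda>i w. measure_pmf.expectation P (u i w))"
proof -
  have integrable: "integrable (measure_pmf P) f"
    if bounded: "\<exists>B. \<forall>\<tau>. \<bar>f \<tau>\<bar> \<le> B" for f :: "'b \<Rightarrow> real"
  proof -
    obtain B where "\<And>\<tau>. \<bar>f \<tau>\<bar> \<le> B"
      using bounded by blast
    then show ?thesis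
      by (intro measure_pmf.integrable_const_bound[where B = B]) auto
  qed
  have "measure_pmf.expectation P (u i (w(i := x))) - measure_pmf.expectation P (u i w)
      = measure_pmf.expectation P (\<Phi> (w(i := x))) - measure_pmf.expectation P (\<Phi> w)" for i w x
  proof -
    have "measure_pmf.expectation P (u i (w(i := x))) - measure_pmf.expectation P (u i w)
        = measure_pmf.expectation P (\<lambda>\<tau>. u i (w(i := x)) \<tau> - u i w \<tau>)"
      by (rule Bochner_Integration.integral_diff[symmetric]) (intro integrable u_bounded)+
    also have "\<dots> = measure_pmf.expectation P (\<lambda>\<tau>. \<Phi> (w(i := x)) \<tau> - \<Phi> w \<tau>)"
      by (simp only: potential)
    also have "\<dots> = measure_pmf.expectation P (\<Phi> (w(i := x))) - measure_pmf.expectation P (\<Phi> w)"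
      by (rule Bochner_Integration.integral_diff) (intro integrable \<Phi>_bounded)+
    finally show ?thesis .
  qed
  then show ?thesis
    unfolding exact_potential_game_def
    by (intro exI[of _ "\<lambda>w. measure_pmf.expectation P (\<Phi> w)"]) blast
qed

lemma exact_potential_game_pure_nash:
  fixes A :: "'i::finite \<Rightarrow> 'a set"
  assumes "exact_potential_game A u" "\<And>i. finite (A i)" "\<And>i. A i \<noteq> {}"
  shows "\<exists>w. pure_nash A u w"
proof -
  obtain \<Phi> where \<Phi>: "\<And>w i x. w \<in> Pi UNIV A \<Longrightarrow> x \<in> A i \<Longrightarrow>
      u i (w(i := x)) - u i w = \<Phi> (w(i := x)) - \<Phi> w"
    using assms(1) unfolding exact_potential_game_def by blast
  have "finite (Pi UNIV A)"
    using finite_PiE[of UNIV A] assms(2) by (simp add: PiE_UNIV_domain)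
  moreover have "Pi UNIV A \<noteq> {}"
    using assms(3) by (simp add: Pi_eq_empty)
  ultimately have "Max (\<Phi> ` Pi UNIV A) \<in> \<Phi> ` Pi UNIV A"
    by (intro Max_in) auto
  then obtain w where w: "w \<in> Pi UNIV A" "\<Phi> w = Max (\<Phi> ` Pi UNIV A)"
    by auto
  have "pure_nash A u w"
    unfolding pure_nash_def
  proof (intro conjI allI ballI)
    fix i x assume "x \<in> A i"
    then have "w(i := x) \<in> Pi UNIV A"
      using w(1) by auto
    then have "\<Phi> (w(i := x)) \<le> \<Phi> w"
      unfolding w(2) using \<open>finite (Pi UNIV A)\<close> by (intro Max_ge) auto
    then show "u i (w(i := x)) \<le> u i w"
      using \<Phi>[OF w(1) \<open>x \<in> A i\<close>] by simp
  qed (fact w(1))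
  then show ?thesis
    by blast
qed

definition occupied :: "nat \<Rightarrow> ('i \<Rightarrow> nat \<Rightarrow> 'e) \<Rightarrow> ('i \<Rightarrow> nat) \<Rightarrow> ('i \<Rightarrow> nat)
     \<Rightarrow> ('i \<Rightarrow> nat \<Rightarrow> nat) \<Rightarrow> ('e, 'i) realization \<Rightarrow> 'i \<Rightarrow> ('e \<times> nat) set" where
  "occupied ts pth a b w \<tau> j = (\<lambda>k. (pth j k, departure ts pth a w \<tau> j k)) ` {a j..b j}"

lemma finite_occupied [simp]: "finite (occupied ts pth a b w \<tau> j)"
  unfolding occupied_def by simp

lemma occupied_fun_upd:
  "occupied ts pth a b (w(i := x)) \<tau>
     = (occupied ts pth a b w \<tau>)(i := occupied ts pth a b (w(i := x)) \<tau> i)"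
  by (rule ext) (simp add: occupied_def departure_def)

lemma card_coll_eq_congestion:
  "card (coll ts pth a b w \<tau> e t) = congestion (occupied ts pth a b w \<tau>) (e, t)"
  unfolding coll_def congestion_def occupied_def by (rule arg_cong[where f = card]) auto

lemma sum_occupied:
  assumes "inj_on (pth j) {a j..b j}"
  shows "(\<Sum>r\<in>occupied ts pth a b w \<tau> j. g r) = (\<Sum>k = a j..b j. g (pth j k, departure ts pth a w \<tau> j k))"
  unfolding occupied_def using assms by (subst sum.reindex) (auto simp: inj_on_def)

lemma utility_eq_congestion_reward:
  assumes "inj_on (pth i) {a i..b i}"
  shows "utility ts pth a b R \<Lambda> i w \<tau>
       = (\<Sum>r\<in>occupied ts pth a b w \<tau> i. R (congestion (occupied ts pth a b w \<tau>) r) (fst r)) - \<Lambda> i (w i)"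
  unfolding utility_def sum_occupied[of pth i a b, OF assms] card_coll_eq_congestion by simp

definition platoon_potential :: "nat \<Rightarrow> ('i::finite \<Rightarrow> nat \<Rightarrow> 'e) \<Rightarrow> ('i \<Rightarrow> nat) \<Rightarrow> ('i \<Rightarrow> nat)
     \<Rightarrow> (nat \<Rightarrow> 'e \<Rightarrow> real) \<Rightarrow> ('i \<Rightarrow> (nat \<Rightarrow> nat) \<Rightarrow> real)
     \<Rightarrow> ('i \<Rightarrow> nat \<Rightarrow> nat) \<Rightarrow> ('e, 'i) realization \<Rightarrow> real" where
  "platoon_potential ts pth a b R \<Lambda> w \<tau> =
     rosenthal_potential (\<lambda>r m. R m (fst r)) (occupied ts pth a b w \<tau>) - (\<Sum>j\<in>UNIV. \<Lambda> j (w j))"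

lemma utility_fun_upd_diff:
  fixes pth :: "'i::finite \<Rightarrow> nat \<Rightarrow> 'e"
  assumes "inj_on (pth i) {a i..b i}"
  shows "utility ts pth a b R \<Lambda> i (w(i := x)) \<tau> - utility ts pth a b R \<Lambda> i w \<tau>
       = platoon_potential ts pth a b R \<Lambda> (w(i := x)) \<tau> - platoon_potential ts pth a b R \<Lambda> w \<tau>"
proof -
  let ?U = "occupied ts pth a b w \<tau>" and ?U' = "occupied ts pth a b (w(i := x)) \<tau>"
  have "rosenthal_potential (\<lambda>r m. R m (fst r)) ?U' - rosenthal_potential (\<lambda>r m. R m (fst r)) ?U
      = (\<Sum>r\<in>?U' i. R (congestion ?U' r) (fst r)) - (\<Sum>r\<in>?U i. R (congestion ?U r) (fst r))"
    using rosenthal_potential_fun_upd[of ?U "?U' i" "\<lambda>r m. R m (fst r)" i]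
    by (simp flip: occupied_fun_upd)
  then show ?thesis
    unfolding platoon_potential_def utility_eq_congestion_reward[of pth i a b, OF assms]
    using sum_fun_upd_diff[of \<Lambda> w i x] by simp
qed

lemma abs_utility_le:
  fixes pth :: "'i::finite \<Rightarrow> nat \<Rightarrow> 'e"
  shows "\<bar>utility ts pth a b R \<Lambda> i w \<tau>\<bar>
       \<le> (\<Sum>k = a i..b i. \<Sum>m\<le>CARD('i). \<bar>R m (pth i k)\<bar>) + \<bar>\<Lambda> i (w i)\<bar>"
proof -
  have "\<bar>R (card (coll ts pth a b w \<tau> e t)) e\<bar> \<le> (\<Sum>m\<le>CARD('i). \<bar>R m e\<bar>)" for e t
    by (rule member_le_sum[where f = "\<lambda>m. \<bar>R m e\<bar>"]) (auto intro: card_mono)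
  then have "\<bar>\<Sum>k = a i..b i. R (card (coll ts pth a b w \<tau> (pth i k) (departure ts pth a w \<tau> i k))) (pth i k)\<bar>
      \<le> (\<Sum>k = a i..b i. \<Sum>m\<le>CARD('i). \<bar>R m (pth i k)\<bar>)"
    by (intro order_trans[OF sum_abs] sum_mono)
  then show ?thesis
    unfolding utility_def by linarith
qed

lemma abs_platoon_potential_le:
  fixes pth :: "'i::finite \<Rightarrow> nat \<Rightarrow> 'e"
  assumes "\<And>j. inj_on (pth j) {a j..b j}"
  shows "\<bar>platoon_potential ts pth a b R \<Lambda> w \<tau>\<bar>
       \<le> (\<Sum>j\<in>UNIV. \<Sum>k = a j..b j. \<Sum>m\<le>CARD('i). \<bar>R m (pth j k)\<bar>) + \<bar>\<Sum>j\<in>UNIV. \<Lambda> j (w j)\<bar>"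
  using abs_rosenthal_potential_le[of "occupied ts pth a b w \<tau>" "\<lambda>r m. R m (fst r)"]
  unfolding platoon_potential_def by (simp add: sum_occupied[of pth _ a b, OF assms])

theorem corollary2:
  fixes src tgt :: "'e \<Rightarrow> 'v"
    and pth :: "'i::finite \<Rightarrow> nat \<Rightarrow> 'e"
    and len a b :: "'i \<Rightarrow> nat"
    and tstar :: nat
    and W :: "'i \<Rightarrow> (nat \<Rightarrow> nat) set"
    and R :: "nat \<Rightarrow> 'e \<Rightarrow> real"
    and \<Lambda> :: "'i \<Rightarrow> (nat \<Rightarrow> nat) \<Rightarrow> real"
    and P :: "('e, 'i) realization pmf"
  assumes path_conn: "\<And>i k. 1 \<le> k \<Longrightarrow> k < len i \<Longrightarrow> tgt (pth i k) = src (pth i (Suc k))"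
    and path_simple: "\<And>i. inj_on (pth i) {1..len i}"
    and ab: "\<And>i. 1 \<le> a i \<and> a i \<le> b i \<and> b i \<le> len i"
    and W_fin: "\<And>i. finite (W i)"
    and W_ne: "\<And>i. W i \<noteq> {}"
  shows "exact_potential_game W (exp_utility P tstar pth a b R \<Lambda>)
       \<and> (\<exists>w. pure_nash W (exp_utility P tstar pth a b R \<Lambda>) w)"
proof -
  have inj: "inj_on (pth i) {a i..b i}" for i
    by (rule inj_on_subset[OF path_simple]) (use ab[of i] in auto)
  have "exact_potential_game W (\<lambda>i w. measure_pmf.expectation P (utility tstar pth a b R \<Lambda> i w))"
  proof (rule exact_potential_game_expectation)
    show "utility tstar pth a b R \<Lambda> i (w(i := x)) \<tau> - utility tstar pth a b R \<Lambda> i w \<tau>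
        = platoon_potential tstar pth a b R \<Lambda> (w(i := x)) \<tau> - platoon_potential tstar pth a b R \<Lambda> w \<tau>"
      for i w x \<tau>
      by (rule utility_fun_upd_diff[OF inj])
  qed (use abs_utility_le abs_platoon_potential_le[of pth a b, OF inj] in blast)+
  then have "exact_potential_game W (exp_utility P tstar pth a b R \<Lambda>)"
    by (simp add: exp_utility_def[abs_def])
  then show ?thesis
    using exact_potential_game_pure_nash W_fin W_ne by blast
qed

end
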